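(* Let $G$ be a finite group with conjugacy classes $\mathcal{C}_1,\dots,\mathcal{C}_s$, and let $r\ge 2$ be a prime with $r\nmid |G|$. Let $g\in G\wr S_n$ have type $T(g)=(T(g)_{ij})_{s\times n}$. Then $g$ is an $r$-th power in $G\wr S_n$ if and only if $r\mid T(g)_{ij}$ whenever $r\mid j$.
   Context: $G\wr S_n$ is the set of pairs $(f,\pi)$ with $f:\{1,\dots,n\}\to G$ and $\pi\in S_n$, with product $(f,\pi)(f',\pi')=(ff'_\pi,\pi\pi')$, $f'_\pi(i)=f'(\pi^{-1}(i))$, pointwise product of functions. For $(f,\pi)$ and a cycle $(j,\pi(j),\dots,\pi^t(j))$ of $\pi$, its cycle product is $f(j)f(\pi^{-1}(j))\cdots f(\pi^{-t}(j))$; its conjugacy class is independent of the starting point. The type $T(g)$ of $g=(f,\pi)$ is the $s\times n$ matrix whose $(i,k)$ entry is the number of $k$-cycles of $\pi$ whose cycle product lies in $\mathcal{C}_i$. An element $g$ is an $r$-th power if $g=h^r$ for some $h\in G\wr S_n$. *)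

theory Defs
  imports "HOL-Algebra.Algebra" "HOL-Combinatorics.Permutations" "HOL-Computational_Algebra.Primes"
begin

definition conj_class :: "('a, 'b) monoid_scheme \<Rightarrow> 'a \<Rightarrow> 'a set" where
  "conj_class G x = {h \<otimes>\<^bsub>G\<^esub> x \<otimes>\<^bsub>G\<^esub> inv\<^bsub>G\<^esub> h | h. h \<in> carrier G}"

definition conj_classes :: "('a, 'b) monoid_scheme \<Rightarrow> 'a set set" where
  "conj_classes G = conj_class G ` carrier G"

text \<open>The wreath product G wr S_n: pairs (f, pi) with f : {1..n} -> G
  (extended by the identity outside {1..n}) and pi a permutation of {1..n};
  (f,pi)(f',pi') = (f f'_pi, pi pi') with f'_pi(i) = f'(pi^{-1} i) and
  (pi pi') = pi o pi'.\<close>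
definition wr_carrier :: "('a, 'b) monoid_scheme \<Rightarrow> nat \<Rightarrow> ((nat \<Rightarrow> 'a) \<times> (nat \<Rightarrow> nat)) set" where
  "wr_carrier G n = {(f, p). (\<forall>i\<in>{1..n}. f i \<in> carrier G) \<and>
                             (\<forall>i. i \<notin> {1..n} \<longrightarrow> f i = \<one>\<^bsub>G\<^esub>) \<and>
                             p permutes {1..n}}"

definition wr_mult :: "('a, 'b) monoid_scheme \<Rightarrow> (nat \<Rightarrow> 'a) \<times> (nat \<Rightarrow> nat) \<Rightarrow> (nat \<Rightarrow> 'a) \<times> (nat \<Rightarrow> nat) \<Rightarrow> (nat \<Rightarrow> 'a) \<times> (nat \<Rightarrow> nat)" where
  "wr_mult G x y = ((\<lambda>i. fst x i \<otimes>\<^bsub>G\<^esub> fst y (inv_into UNIV (snd x) i)), snd x \<circ> snd y)"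

definition wreath :: "('a, 'b) monoid_scheme \<Rightarrow> nat \<Rightarrow> ((nat \<Rightarrow> 'a) \<times> (nat \<Rightarrow> nat)) monoid" where
  "wreath G n = \<lparr> carrier = wr_carrier G n, monoid.mult = wr_mult G, monoid.one = (\<lambda>_. \<one>\<^bsub>G\<^esub>, id) \<rparr>"

definition cycle_prod :: "('a, 'b) monoid_scheme \<Rightarrow> (nat \<Rightarrow> 'a) \<Rightarrow> (nat \<Rightarrow> nat) \<Rightarrow> nat \<Rightarrow> nat \<Rightarrow> 'a" where
  "cycle_prod G f p j k = foldr (\<otimes>\<^bsub>G\<^esub>) (map (\<lambda>m. f ((inv_into UNIV p ^^ m) j)) [0..<k]) \<one>\<^bsub>G\<^esub>"

definition perm_cycle :: "(nat \<Rightarrow> nat) \<Rightarrow> nat \<Rightarrow> nat set" where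
  "perm_cycle p j = {(p ^^ m) j | m. True}"

definition wr_type :: "('a, 'b) monoid_scheme \<Rightarrow> nat \<Rightarrow> (nat \<Rightarrow> 'a) \<times> (nat \<Rightarrow> nat) \<Rightarrow> 'a set \<Rightarrow> nat \<Rightarrow> nat" where
  "wr_type G n g C k = card {c. \<exists>j\<in>{1..n}. c = perm_cycle (snd g) j \<and> card c = k \<and>
                                   cycle_prod G (fst g) (snd g) j k \<in> C}"

end

theory Submission
  imports Defs "HOL-Combinatorics.Cycles" "HOL-Combinatorics.Orbits" "HOL-Number_Theory.Cong"
begin

(* Write W(A) for the wreath product of G with the symmetric group on a finite index set A, so that
   wreath G n is W({1..n}).

   Necessity: a cycle of h of length r*k splits into r cycles of h^r of length k, each with the
   same cycle product as the original cycle (the product is taken in blocks of r factors).  Hence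
   in h^r the k-cycles with cycle product in a given class come in groups of r whenever r divides k.

   Sufficiency, by induction on |A|.  If some cycle of g has length k prime to r, the restriction
   of g to it has order dividing k |G|, which is prime to r, so it is an r-th power.  Otherwise
   take a cycle of length k; the hypothesis yields r cycles of length k whose cycle products are
   conjugate.  Enumerated in interleaved order, g acts on their union like rotation by r on
   {0..<r*k}; a base element conjugates g there to the element with one cycle product at the first
   point of each cycle, which is the r-th power of (c at 0, rotation by 1).  In both cases g is the
   product of commuting restrictions to the block and to its complement, and the complement still
   satisfies the hypothesis. *)

section \<open>Conjugacy classes and roots in groups\<close>

context group
begin

lemma inv_mult_cancel_left [simp]: "x \<in> carrier G \<Longrightarrow> y \<in> carrier G \<Longrightarrow> inv x \<otimes> (x \<otimes> y) = y"
  by (simp add: m_assoc[symmetric])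

lemma conj_class_conjI: "x \<in> carrier G \<Longrightarrow> z \<in> carrier G \<Longrightarrow> z \<otimes> x \<otimes> inv z \<in> conj_class G x"
  unfolding conj_class_def by blast

lemma conj_class_self: "x \<in> carrier G \<Longrightarrow> x \<in> conj_class G x"
  using conj_class_conjI[of x \<one>] by simp

lemma conj_class_eq:
  assumes x: "x \<in> carrier G" and "y \<in> conj_class G x"
  shows "conj_class G y = conj_class G x"
proof -
  obtain h where h: "h \<in> carrier G" "y = h \<otimes> x \<otimes> inv h"
    using assms(2) unfolding conj_class_def by blast
  show ?thesis
  proof (intro Set.set_eqI iffI)
    fix w assume "w \<in> conj_class G y"
    then obtain z where z: "z \<in> carrier G" "w = z \<otimes> y \<otimes> inv z" unfolding conj_class_def by blast
    then have "w = (z \<otimes> h) \<otimes> x \<otimes> inv (z \<otimes> h)" "z \<otimes> h \<in> carrier G"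
      using h x by (simp_all add: m_assoc inv_mult_group)
    then show "w \<in> conj_class G x" unfolding conj_class_def by blast
  next
    fix w assume "w \<in> conj_class G x"
    then obtain z where z: "z \<in> carrier G" "w = z \<otimes> x \<otimes> inv z" unfolding conj_class_def by blast
    then have "w = (z \<otimes> inv h) \<otimes> y \<otimes> inv (z \<otimes> inv h)" "z \<otimes> inv h \<in> carrier G"
      using h x by (simp_all add: m_assoc inv_mult_group)
    then show "w \<in> conj_class G y" unfolding conj_class_def by blast
  qed
qed

lemma conj_classes_eq: "C \<in> conj_classes G \<Longrightarrow> y \<in> C \<Longrightarrow> C = conj_class G y"
  unfolding conj_classes_def using conj_class_eq by blast

lemma conj_classes_conj_iff:
  assumes "C \<in> conj_classes G" "y \<in> carrier G" "z \<in> carrier G"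
  shows "inv z \<otimes> y \<otimes> z \<in> C \<longleftrightarrow> y \<in> C"
proof -
  have "inv z \<otimes> y \<otimes> z \<in> conj_class G y"
    using conj_class_conjI[of y "inv z"] assms(2,3) by simp
  then show ?thesis
    using conj_classes_eq[OF assms(1)] conj_class_eq[OF assms(2)] conj_class_self[OF assms(2)] by metis
qed

lemma conj_classes_conjugate:
  "C \<in> conj_classes G \<Longrightarrow> y \<in> C \<Longrightarrow> y' \<in> C \<Longrightarrow> \<exists>z\<in>carrier G. y' = z \<otimes> y \<otimes> inv z"
  using conj_classes_eq unfolding conj_class_def by blast

lemma conj_nat_pow:
  assumes "e \<in> carrier G" "x \<in> carrier G"
  shows "(e \<otimes> x \<otimes> inv e) [^] (n::nat) = e \<otimes> x [^] n \<otimes> inv e"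
proof (induction n)
  case (Suc n)
  have "e \<otimes> x [^] n \<otimes> inv e \<otimes> (e \<otimes> x \<otimes> inv e) = e \<otimes> (x [^] n \<otimes> x) \<otimes> inv e"
    using assms by (simp add: m_assoc)
  then show ?case using Suc by simp
qed (use assms in simp)

lemma nat_pow_root_if_coprime:
  assumes x: "x \<in> carrier G" and "x [^] (M::nat) = \<one>" and "coprime r M"
  shows "\<exists>y\<in>carrier G. y [^] r = x"
proof -
  have pow_mod: "x [^] a = x [^] (a mod M)" for a :: nat
  proof -
    have "x [^] a = (x [^] M) [^] (a div M) \<otimes> x [^] (a mod M)"
      using x by (simp add: nat_pow_mult nat_pow_pow)
    then show ?thesis using assms(2) x by simp
  qed
  obtain s where s: "[r * s = Suc 0] (mod M)" using cong_solve_coprime_nat[OF assms(3)] by blast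
  have "(x [^] s) [^] r = x [^] (r * s mod M)"
    using pow_mod[of "r * s"] x by (simp add: nat_pow_pow mult.commute)
  also have "\<dots> = x [^] (Suc 0 mod M)" using s by (simp add: cong_def)
  also have "\<dots> = x" using pow_mod[of "Suc 0"] x by simp
  finally show ?thesis using x by blast
qed

end

section \<open>Products along orbits\<close>

abbreviation inv_perm :: "(nat \<Rightarrow> nat) \<Rightarrow> nat \<Rightarrow> nat" where
  "inv_perm p \<equiv> inv_into UNIV p"

primrec orbit_prod :: "('a, 'b) monoid_scheme \<Rightarrow> (nat \<Rightarrow> 'a) \<Rightarrow> (nat \<Rightarrow> nat) \<Rightarrow> nat \<Rightarrow> nat \<Rightarrow> 'a" where
  "orbit_prod G f q i 0 = \<one>\<^bsub>G\<^esub>"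
| "orbit_prod G f q i (Suc m) = f i \<otimes>\<^bsub>G\<^esub> orbit_prod G f q (q i) m"

lemma cycle_prod_eq_orbit_prod: "cycle_prod G f p j k = orbit_prod G f (inv_perm p) j k"
proof (induction k arbitrary: j)
  case 0
  then show ?case by (simp add: cycle_prod_def)
next
  case (Suc k)
  have "[0..<Suc k] = 0 # map Suc [0..<k]"
    by (simp add: map_Suc_upt upt_conv_Cons)
  then have "cycle_prod G f p j (Suc k) = f j \<otimes>\<^bsub>G\<^esub> cycle_prod G f p (inv_perm p j) k"
    by (simp add: cycle_prod_def funpow_Suc_right comp_def del: funpow.simps upt_Suc)
  then show ?case using Suc by simp
qed

lemma orbit_prod_transfer:
  assumes "m \<in> M" and "\<And>x. x \<in> M \<Longrightarrow> q' x \<in> M \<and> f' x = f (\<beta> x) \<and> q (\<beta> x) = \<beta> (q' x)"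
  shows "orbit_prod G f' q' m k = orbit_prod G f q (\<beta> m) k"
  using assms(1) by (induction k arbitrary: m) (use assms(2) in auto)

context group
begin

lemma orbit_prod_closed: "(\<And>i. f i \<in> carrier G) \<Longrightarrow> orbit_prod G f q i m \<in> carrier G"
  by (induction m arbitrary: i) auto

lemma orbit_prod_add:
  assumes "\<And>i. f i \<in> carrier G"
  shows "orbit_prod G f q i (a + b) = orbit_prod G f q i a \<otimes> orbit_prod G f q ((q ^^ a) i) b"
  by (induction a arbitrary: i)
     (simp_all add: assms orbit_prod_closed m_assoc funpow_Suc_right del: funpow.simps)

lemma orbit_prod_Suc_right:
  "(\<And>i. f i \<in> carrier G) \<Longrightarrow> orbit_prod G f q i (Suc m) = orbit_prod G f q i m \<otimes> f ((q ^^ m) i)"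
  using orbit_prod_add[of f q i m 1] by (simp add: orbit_prod_closed)

lemma orbit_prod_blocks:
  assumes "\<And>i. f i \<in> carrier G"
  shows "orbit_prod G (\<lambda>i. orbit_prod G f q i r) (q ^^ r) j k = orbit_prod G f q j (r * k)"
proof (induction k arbitrary: j)
  case (Suc k)
  have "orbit_prod G f q j (r * Suc k) = orbit_prod G f q j r \<otimes> orbit_prod G f q ((q ^^ r) j) (r * k)"
    using orbit_prod_add[of f q j r "r * k"] assms by simp
  then show ?case using Suc by simp
qed simp

lemma orbit_prod_periodic:
  assumes "\<And>i. f i \<in> carrier G" and "(q ^^ a) i = i"
  shows "orbit_prod G f q i (a * b) = orbit_prod G f q i a [^] b"
proof (induction b)
  case (Suc b)
  have "orbit_prod G f q i (a * Suc b) = orbit_prod G f q i a \<otimes> orbit_prod G f q i (a * b)"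
    using orbit_prod_add[of f q i a "a * b"] assms by simp
  also have "\<dots> = orbit_prod G f q i a [^] Suc b"
    unfolding Suc.IH by (rule nat_pow_Suc2[symmetric]) (simp add: orbit_prod_closed assms(1))
  finally show ?case .
qed simp

lemma orbit_prod_shift_start:
  assumes "\<And>i. f i \<in> carrier G" and "(q ^^ k) j = j"
  shows "orbit_prod G f q (q j) k = inv (f j) \<otimes> orbit_prod G f q j k \<otimes> f j"
proof -
  have "f j \<otimes> orbit_prod G f q (q j) k = orbit_prod G f q j k \<otimes> f j"
    using orbit_prod_Suc_right[of f q j k] assms by simp
  then have "inv (f j) \<otimes> (f j \<otimes> orbit_prod G f q (q j) k) = inv (f j) \<otimes> (orbit_prod G f q j k \<otimes> f j)"
    by simp
  then show ?thesis using assms by (simp add: m_assoc[symmetric] orbit_prod_closed)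
qed

end

section \<open>Cycles of permutations\<close>

lemma funpow_inv_fixed_iff:
  assumes "bij p"
  shows "(inv_perm p ^^ t) j = j \<longleftrightarrow> (p ^^ t) j = j"
proof -
  have "inv_perm p ^^ t = inv_perm (p ^^ t)" using inv_fn[OF assms] by simp
  then show ?thesis using bij_fn[OF assms, of t] by (metis bij_inv_eq_iff)
qed

lemma perm_cycle_range: "perm_cycle p j = range (\<lambda>t. (p ^^ t) j)"
  unfolding perm_cycle_def by auto

lemma perm_cycle_eq_orbit: "permutation p \<Longrightarrow> perm_cycle p j = Orbits.orbit p j"
  unfolding perm_cycle_def by (simp add: orbit_altdef_permutation)

lemma perm_cycle_eq_support: "permutation p \<Longrightarrow> perm_cycle p j = set (support p j)"
  unfolding perm_cycle_range by (rule support_set[symmetric])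

lemma card_perm_cycle: "permutation p \<Longrightarrow> card (perm_cycle p j) = least_power p j"
  unfolding perm_cycle_eq_support by (subst distinct_card[OF cycle_of_permutation]) simp_all

lemma finite_perm_cycle: "permutation p \<Longrightarrow> finite (perm_cycle p j)"
  by (simp add: perm_cycle_eq_support)

lemma self_in_perm_cycle: "j \<in> perm_cycle p j"
  unfolding perm_cycle_def by (auto intro: exI[of _ 0])

lemma funpow_in_perm_cycle: "(p ^^ t) j \<in> perm_cycle p j"
  unfolding perm_cycle_def by auto

lemma perm_cycle_eqI: "permutation p \<Longrightarrow> i \<in> perm_cycle p j \<Longrightarrow> perm_cycle p i = perm_cycle p j"
  by (simp add: perm_cycle_eq_orbit orbit_cyclic_eq3 cyclic_on_orbit')

lemma perm_cycle_step: "permutation p \<Longrightarrow> perm_cycle p (p j) = perm_cycle p j"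
  by (simp add: perm_cycle_eq_orbit permutation_orbit_step)

lemma perm_cycle_subset: "p permutes A \<Longrightarrow> j \<in> A \<Longrightarrow> perm_cycle p j \<subseteq> A"
  unfolding perm_cycle_def by (auto intro: permutes_in_funpow_image)

lemma permutes_image_eqI:
  assumes "\<sigma> permutes A" "finite B" "\<And>i. i \<in> B \<Longrightarrow> \<sigma> i \<in> B"
  shows "\<sigma> ` B = B"
  using assms by (intro endo_inj_surj) (auto intro: inj_on_subset[OF permutes_inj[OF assms(1)]])

lemma perm_cycle_image:
  assumes "\<sigma> permutes A" "finite A"
  shows "\<sigma> ` perm_cycle \<sigma> j = perm_cycle \<sigma> j"
proof (rule permutes_image_eqI[OF assms(1)])
  show "finite (perm_cycle \<sigma> j)" using assms permutation_permutes finite_perm_cycle by blast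
  fix i assume "i \<in> perm_cycle \<sigma> j"
  then obtain t where "i = (\<sigma> ^^ t) j" unfolding perm_cycle_def by auto
  then show "\<sigma> i \<in> perm_cycle \<sigma> j" using funpow_in_perm_cycle[of "Suc t" \<sigma> j] by simp
qed

lemma funpow_eq_imp_eq:
  assumes "permutation p" "a < least_power p j" "b < least_power p j" "(p ^^ a) j = (p ^^ b) j"
  shows "a = b"
proof -
  have "inj_on (\<lambda>t. (p ^^ t) j) {0..<least_power p j}"
    using cycle_of_permutation[OF assms(1), of j] by (simp add: distinct_map atLeast_upt)
  then show ?thesis using assms(2-4) by (auto dest: inj_onD)
qed

lemma least_power_funpow_prime:
  assumes "permutation p" and "Factorial_Ring.prime (r::nat)"
  shows "least_power (p ^^ r) j = (if r dvd least_power p j then least_power p j div r else least_power p j)"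
proof -
  let ?l = "least_power p j"
  have fixed_iff: "((p ^^ r) ^^ t) j = j \<longleftrightarrow> ?l dvd r * t" for t
    using least_power_dvd[OF assms(1)] by (simp add: funpow_mult)
  have least_power_eqI: "least_power (p ^^ r) j = d" if "\<And>t. ?l dvd r * t \<longleftrightarrow> d dvd t" for d
    using least_power_dvd[OF permutation_funpow[OF assms(1)], of r j] fixed_iff that
    by (metis dvd_antisym dvd_refl)
  show ?thesis
  proof (cases "r dvd ?l")
    case True
    then obtain d where "?l = r * d" by blast
    then show ?thesis using assms(2) by (simp add: least_power_eqI prime_gt_0_nat)
  next
    case False
    then have "coprime ?l r" using assms(2) by (simp add: prime_imp_coprime coprime_commute)
    then show ?thesis using False by (simp add: least_power_eqI coprime_dvd_mult_right_iff)
  qed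
qed

lemma least_power_funpow_prime_eq_iff:
  assumes "permutation p" "Factorial_Ring.prime (r::nat)" "r dvd k"
  shows "least_power (p ^^ r) j = k \<longleftrightarrow> least_power p j = r * k"
  using least_power_funpow_prime[OF assms(1,2), of j] assms(2,3) least_power_of_permutation(2)[OF assms(1), of j]
  by (cases "r dvd least_power p j") (auto simp: prime_gt_0_nat)

lemma funpow_preserves_cycle_property:
  assumes "\<sigma> permutes A" "finite A"
    and Q: "\<And>i. i \<in> A \<Longrightarrow> card (perm_cycle \<sigma> i) = k \<Longrightarrow> Q (\<sigma> i) = Q i"
    and j: "j \<in> A" "card (perm_cycle \<sigma> j) = k" "Q j"
  shows "(\<sigma> ^^ t) j \<in> A \<and> card (perm_cycle \<sigma> ((\<sigma> ^^ t) j)) = k \<and> Q ((\<sigma> ^^ t) j)"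
proof (induction t)
  case (Suc t)
  have "perm_cycle \<sigma> (\<sigma> ((\<sigma> ^^ t) j)) = perm_cycle \<sigma> ((\<sigma> ^^ t) j)"
    using assms(1,2) by (metis perm_cycle_step permutation_permutes)
  then show ?case using Suc Q[of "(\<sigma> ^^ t) j"] permutes_in_image[OF assms(1)] by auto
qed (use j in simp)

lemma card_cycles_mult_length:
  assumes "\<sigma> permutes A" "finite A" and Q: "\<And>i. i \<in> A \<Longrightarrow> card (perm_cycle \<sigma> i) = k \<Longrightarrow> Q (\<sigma> i) = Q i"
  shows "card {c. \<exists>j\<in>A. c = perm_cycle \<sigma> j \<and> card c = k \<and> Q j} * k
       = card {j\<in>A. card (perm_cycle \<sigma> j) = k \<and> Q j}"
proof -
  have \<sigma>: "permutation \<sigma>" using assms(1,2) permutation_permutes by blast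
  define S where "S = {c. \<exists>j\<in>A. c = perm_cycle \<sigma> j \<and> card c = k \<and> Q j}"
  define J where "J = {j\<in>A. card (perm_cycle \<sigma> j) = k \<and> Q j}"
  have "J = \<Union>S"
  proof
    show "J \<subseteq> \<Union>S" unfolding J_def S_def using self_in_perm_cycle by blast
    show "\<Union>S \<subseteq> J"
    proof
      fix x assume "x \<in> \<Union>S"
      then obtain j t where "j \<in> J" "x = (\<sigma> ^^ t) j"
        unfolding S_def J_def perm_cycle_def by auto
      then show "x \<in> J" using funpow_preserves_cycle_property[of \<sigma> A k Q, OF assms] by (simp add: J_def)
    qed
  qed
  have "finite S"
    using finite_surj[OF assms(2), of S "perm_cycle \<sigma>"] by (auto simp: S_def)
  have "pairwise disjnt S"
    unfolding pairwise_def disjnt_def S_def using perm_cycle_eqI[OF \<sigma>] by blast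
  have "card J = sum card S"
    unfolding \<open>J = \<Union>S\<close> by (rule card_Union_disjoint[OF \<open>pairwise disjnt S\<close>]) (auto simp: S_def finite_perm_cycle[OF \<sigma>])
  also have "\<dots> = (\<Sum>c\<in>S. k)" by (rule sum.cong) (auto simp: S_def)
  also have "\<dots> = card S * k" by simp
  finally show ?thesis unfolding S_def J_def by simp
qed

lemma obtain_injective_representatives:
  assumes "r \<le> card {c. \<exists>j\<in>A. c = f j \<and> P j}"
  obtains a where "\<And>u. u < r \<Longrightarrow> a u \<in> A \<and> P (a u)" "inj_on (\<lambda>u. f (a u)) {..<r}"
proof -
  define S where "S = {c. \<exists>j\<in>A. c = f j \<and> P j}"
  obtain S' where S': "S' \<subseteq> S" "card S' = r" "finite S'"
    using obtain_subset_with_card_n[OF assms[folded S_def]] by blast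
  obtain e where e: "bij_betw e {..<r} S'"
    using ex_bij_betw_nat_finite[OF S'(3)] S'(2) by (auto simp: atLeast0LessThan)
  have "\<exists>j. u < r \<longrightarrow> j \<in> A \<and> P j \<and> e u = f j" for u
    using e S'(1) unfolding S_def bij_betw_def by blast
  then obtain a where a: "\<And>u. u < r \<Longrightarrow> a u \<in> A \<and> P (a u) \<and> e u = f (a u)" by metis
  have "inj_on (\<lambda>u. f (a u)) {..<r}"
    using bij_betw_imp_inj_on[OF e] a by (simp add: inj_on_def)
  then show ?thesis using a that by blast
qed

lemma permutes_image_Diff: "\<sigma> permutes A \<Longrightarrow> \<sigma> ` B = B \<Longrightarrow> \<sigma> ` (A - B) = A - B"
  by (simp add: image_set_diff permutes_inj permutes_image)

lemma inv_perm_mem_invariant: "\<sigma> permutes A \<Longrightarrow> \<sigma> ` B = B \<Longrightarrow> x \<in> B \<Longrightarrow> inv_perm \<sigma> x \<in> B"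
  by (metis imageE inv_f_f permutes_inj)

lemma perm_restrict_permutes:
  assumes "\<sigma> permutes A" "\<sigma> ` B = B"
  shows "perm_restrict \<sigma> B permutes B"
proof (rule bij_imp_permutes)
  have "bij_betw \<sigma> B B"
    using assms inj_on_subset[OF permutes_inj[OF assms(1)]] by (simp add: bij_betw_def)
  then show "bij_betw (perm_restrict \<sigma> B) B B"
    by (rule bij_betw_cong[THEN iffD1, rotated]) (simp add: perm_restrict_simps)
qed (simp add: perm_restrict_simps)

lemma inv_perm_restrict:
  assumes "\<sigma> permutes A" "\<sigma> ` B = B" "x \<in> B"
  shows "inv_perm (perm_restrict \<sigma> B) x = inv_perm \<sigma> x"
proof -
  obtain b where b: "b \<in> B" "x = \<sigma> b" using assms(2,3) by blast
  then have "perm_restrict \<sigma> B b = x" by (simp add: perm_restrict_simps)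
  then show ?thesis
    using b permutes_inj[OF assms(1)] permutes_inj[OF perm_restrict_permutes[OF assms(1,2)]]
    by (simp add: inv_f_eq)
qed

lemma funpow_mem_invariant: "\<sigma> ` B = B \<Longrightarrow> j \<in> B \<Longrightarrow> (\<sigma> ^^ t) j \<in> B"
  by (induction t) auto

lemma funpow_perm_restrict: "\<sigma> ` B = B \<Longrightarrow> j \<in> B \<Longrightarrow> (perm_restrict \<sigma> B ^^ t) j = (\<sigma> ^^ t) j"
  by (induction t) (simp_all add: perm_restrict_simps funpow_mem_invariant)

lemma perm_cycle_perm_restrict:
  "\<sigma> ` B = B \<Longrightarrow> j \<in> B \<Longrightarrow> perm_cycle (perm_restrict \<sigma> B) j = perm_cycle \<sigma> j"
  unfolding perm_cycle_def by (simp add: funpow_perm_restrict)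

section \<open>Rotations and interleaved cycles\<close>

definition rot :: "nat \<Rightarrow> nat \<Rightarrow> nat \<Rightarrow> nat" where
  "rot N d m = (if m < N then (m + d) mod N else m)"

lemma rot_eq_add: "m + d < N \<Longrightarrow> rot N d m = m + d"
  by (simp add: rot_def)

lemma rot_eq_add_sub: "m < N \<Longrightarrow> N \<le> m + d \<Longrightarrow> d \<le> N \<Longrightarrow> rot N d m = m + d - N"
  by (simp add: rot_def le_mod_geq)

lemma rot_less: "m < N \<Longrightarrow> rot N d m < N"
  by (simp add: rot_def)

lemma rot_rot: "rot N a (rot N b m) = rot N (a + b) m"
  by (simp add: rot_def mod_add_left_eq add.assoc add.commute[of a])

lemma rot_N: "rot N N m = m"
  by (simp add: rot_def)

lemma funpow_rot: "rot N 1 ^^ t = rot N t"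
  by (induction t) (simp_all add: fun_eq_iff rot_rot, simp add: rot_def)

lemma rot_permutes: "d \<le> N \<Longrightarrow> rot N d permutes {0..<N}"
  by (rule bij_imp_permutes[OF bij_betw_byWitness[where f' = "rot N (N - d)"]])
     (auto simp: rot_rot rot_N rot_less, simp_all add: rot_def)

lemma inv_perm_rot: "d \<le> N \<Longrightarrow> inv_perm (rot N d) = rot N (N - d)"
  by (rule inv_unique_comp) (simp_all add: fun_eq_iff rot_rot rot_N)

lemma rot_mult_div_mod:
  assumes "0 < r" "m < r * k"
  shows "rot (r * k) r m mod r = m mod r" and "rot (r * k) r m div r = Suc (m div r) mod k"
proof -
  have "rot (r * k) r m = r * (Suc (m div r) mod k) + m mod r"
    using assms by (simp add: rot_def mod_mult2_eq)
  then show "rot (r * k) r m mod r = m mod r" "rot (r * k) r m div r = Suc (m div r) mod k"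
    using assms(1) by simp_all
qed

lemma rot_back_div_mod:
  assumes "0 < r" "0 < k" "m < r * k"
  shows "rot (r * k) (r * k - r) m mod r = m mod r"
    and "Suc (rot (r * k) (r * k - r) m div r) = (if r \<le> m then m div r else k)"
proof -
  have "rot (r * k) (r * k - r) m = (if r \<le> m then m - r else m + r * (k - 1))"
  proof (cases "r \<le> m")
    case False
    moreover have "r * k - r = r * (k - 1)" by (simp add: diff_mult_distrib2)
    ultimately show ?thesis using assms by (simp add: rot_eq_add)
  qed (use assms in \<open>simp add: rot_eq_add_sub\<close>)
  then show "rot (r * k) (r * k - r) m mod r = m mod r"
    "Suc (rot (r * k) (r * k - r) m div r) = (if r \<le> m then m div r else k)"
    using assms(1,2) by (simp_all add: le_mod_geq le_div_geq div_greater_zero_iff)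
qed

text \<open>An enumeration of r cycles of length k through a 0, ..., a (r - 1) under which sigma becomes
  rotation by r on {0..<r*k}.\<close>

definition interleave :: "(nat \<Rightarrow> nat) \<Rightarrow> (nat \<Rightarrow> nat) \<Rightarrow> nat \<Rightarrow> nat \<Rightarrow> nat" where
  "interleave \<sigma> a r m = (\<sigma> ^^ (m div r)) (a (m mod r))"

lemma interleave_rot:
  assumes "\<And>u. u < r \<Longrightarrow> (\<sigma> ^^ k) (a u) = a u" "0 < r" "m < r * k"
  shows "\<sigma> (interleave \<sigma> a r m) = interleave \<sigma> a r (rot (r * k) r m)"
proof -
  have "\<sigma> (interleave \<sigma> a r m) = (\<sigma> ^^ Suc (m div r)) (a (m mod r))"
    by (simp add: interleave_def)
  also have "\<dots> = (\<sigma> ^^ (Suc (m div r) mod k)) (a (m mod r))"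
    using assms(1)[of "m mod r"] assms(2) by (simp add: funpow_mod_eq)
  finally show ?thesis by (simp add: interleave_def rot_mult_div_mod[OF assms(2,3)])
qed

lemma inj_on_interleave:
  assumes \<sigma>: "permutation \<sigma>" and "0 < r"
    and a: "\<And>u. u < r \<Longrightarrow> least_power \<sigma> (a u) = k" "inj_on (\<lambda>u. perm_cycle \<sigma> (a u)) {..<r}"
  shows "inj_on (interleave \<sigma> a r) {0..<r * k}"
proof (rule inj_onI)
  fix m m' assume m: "m \<in> {0..<r * k}" "m' \<in> {0..<r * k}" and eq: "interleave \<sigma> a r m = interleave \<sigma> a r m'"
  have cycle: "perm_cycle \<sigma> (interleave \<sigma> a r n) = perm_cycle \<sigma> (a (n mod r))" for n
    unfolding interleave_def by (rule perm_cycle_eqI[OF \<sigma> funpow_in_perm_cycle])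
  have "m mod r = m' mod r"
    using a(2) cycle[of m] cycle[of m'] eq \<open>0 < r\<close> by (simp add: inj_on_def)
  moreover have "m div r < k" "m' div r < k"
    using m by (simp_all add: less_mult_imp_div_less mult.commute)
  ultimately have "m div r = m' div r"
    using funpow_eq_imp_eq[OF \<sigma>, of "m div r" "a (m mod r)" "m' div r"] a(1)[of "m mod r"] eq \<open>0 < r\<close>
    unfolding interleave_def by simp
  with \<open>m mod r = m' mod r\<close> show "m = m'" by (metis div_mult_mod_eq)
qed

section \<open>Wreath products over an arbitrary index set\<close>

type_synonym 'a wr_elem = "(nat \<Rightarrow> 'a) \<times> (nat \<Rightarrow> nat)"

definition wreath_on :: "('a, 'b) monoid_scheme \<Rightarrow> nat set \<Rightarrow> 'a wr_elem monoid" where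
  "wreath_on G A = \<lparr>carrier = {(f, p). (\<forall>i\<in>A. f i \<in> carrier G) \<and> (\<forall>i. i \<notin> A \<longrightarrow> f i = \<one>\<^bsub>G\<^esub>) \<and> p permutes A},
     monoid.mult = wr_mult G, monoid.one = (\<lambda>_. \<one>\<^bsub>G\<^esub>, id)\<rparr>"

lemma wreath_eq_wreath_on: "wreath G n = wreath_on G {1..n}"
  unfolding wreath_def wreath_on_def wr_carrier_def by simp

lemma wreath_on_mult [simp]: "x \<otimes>\<^bsub>wreath_on G A\<^esub> y = wr_mult G x y"
  by (simp add: wreath_on_def)

lemma wreath_on_one [simp]: "\<one>\<^bsub>wreath_on G A\<^esub> = (\<lambda>_. \<one>\<^bsub>G\<^esub>, id)"
  by (simp add: wreath_on_def)

lemma mem_wreath_on: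
  "(f, p) \<in> carrier (wreath_on G A) \<longleftrightarrow>
     (\<forall>i\<in>A. f i \<in> carrier G) \<and> (\<forall>i. i \<notin> A \<longrightarrow> f i = \<one>\<^bsub>G\<^esub>) \<and> p permutes A"
  by (simp add: wreath_on_def)

lemma wreath_on_nat_pow_indep: "x [^]\<^bsub>wreath_on G A\<^esub> (m::nat) = x [^]\<^bsub>wreath_on G B\<^esub> m"
  by (simp add: nat_pow_def wreath_on_def)

lemma wr_mult_Pair: "wr_mult G (f, p) (f', p') = (\<lambda>i. f i \<otimes>\<^bsub>G\<^esub> f' (inv_perm p i), p \<circ> p')"
  by (simp add: wr_mult_def)

context group
begin

lemma wreath_on_carrierD:
  assumes "(f, p) \<in> carrier (wreath_on G A)"
  shows "f i \<in> carrier G" and "p permutes A" and "i \<notin> A \<Longrightarrow> f i = \<one> \<and> p i = i \<and> inv_perm p i = i"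
  using assms permutes_not_in[of p A] permutes_not_in[OF permutes_inv[of p A]]
  by (cases "i \<in> A"; auto simp: mem_wreath_on)+

lemma wreath_on_group: "Group.group (wreath_on G A)"
proof (rule groupI)
  fix x y assume xy: "x \<in> carrier (wreath_on G A)" "y \<in> carrier (wreath_on G A)"
  obtain f p f' p' where "x = (f, p)" "y = (f', p')" by fastforce
  note x = wreath_on_carrierD[OF xy(1)[unfolded this]] and y = wreath_on_carrierD[OF xy(2)[unfolded this]]
  have "(\<lambda>i. f i \<otimes> f' (inv_perm p i), p \<circ> p') \<in> carrier (wreath_on G A)"
    unfolding mem_wreath_on using x y by (auto intro: permutes_compose)
  then show "x \<otimes>\<^bsub>wreath_on G A\<^esub> y \<in> carrier (wreath_on G A)"
    by (simp add: \<open>x = _\<close> \<open>y = _\<close> wr_mult_Pair)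
next
  show "\<one>\<^bsub>wreath_on G A\<^esub> \<in> carrier (wreath_on G A)"
    by (simp add: mem_wreath_on permutes_id)
next
  fix x y z
  assume xyz: "x \<in> carrier (wreath_on G A)" "y \<in> carrier (wreath_on G A)" "z \<in> carrier (wreath_on G A)"
  obtain f p f' p' f'' p'' where "x = (f, p)" "y = (f', p')" "z = (f'', p'')" by fastforce
  note x = wreath_on_carrierD[OF xyz(1)[unfolded this]] and y = wreath_on_carrierD[OF xyz(2)[unfolded this]]
    and z = wreath_on_carrierD[OF xyz(3)[unfolded this]]
  have "bij p" "bij p'" using x(2) y(2) by (simp_all add: permutes_bij)
  then show "x \<otimes>\<^bsub>wreath_on G A\<^esub> y \<otimes>\<^bsub>wreath_on G A\<^esub> z = x \<otimes>\<^bsub>wreath_on G A\<^esub> (y \<otimes>\<^bsub>wreath_on G A\<^esub> z)"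
    using x(1) y(1) z(1)
    by (simp add: \<open>x = _\<close> \<open>y = _\<close> \<open>z = _\<close> wr_mult_Pair o_inv_distrib m_assoc o_assoc)
next
  fix x assume x: "x \<in> carrier (wreath_on G A)"
  obtain f p where "x = (f, p)" by fastforce
  note x = wreath_on_carrierD[OF x[unfolded this]]
  show "\<one>\<^bsub>wreath_on G A\<^esub> \<otimes>\<^bsub>wreath_on G A\<^esub> x = x"
    using x(1) by (simp add: \<open>x = _\<close> wr_mult_Pair)
  have "(\<lambda>i. inv (f (p i)), inv_perm p) \<in> carrier (wreath_on G A)"
    unfolding mem_wreath_on using x by (auto simp: permutes_inv permutes_in_image)
  moreover have "(\<lambda>i. inv (f (p i)), inv_perm p) \<otimes>\<^bsub>wreath_on G A\<^esub> x = \<one>\<^bsub>wreath_on G A\<^esub>"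
    using x(1,2) by (simp add: \<open>x = _\<close> wr_mult_Pair inv_inv_eq permutes_bij permutes_inv_o id_def)
  ultimately show "\<exists>y\<in>carrier (wreath_on G A). y \<otimes>\<^bsub>wreath_on G A\<^esub> x = \<one>\<^bsub>wreath_on G A\<^esub>"
    by blast
qed

lemma wreath_on_nat_pow:
  assumes "(f, p) \<in> carrier (wreath_on G A)"
  shows "(f, p) [^]\<^bsub>wreath_on G A\<^esub> m = (\<lambda>i. orbit_prod G f (inv_perm p) i m, p ^^ m)"
proof (induction m)
  case 0
  show ?case by (simp add: fun_eq_iff)
next
  case (Suc m)
  have p: "bij p" and f: "\<And>i. f i \<in> carrier G"
    using wreath_on_carrierD[OF assms] by (auto intro: permutes_bij)
  have "(f, p) [^]\<^bsub>wreath_on G A\<^esub> Suc m = wr_mult G (\<lambda>i. orbit_prod G f (inv_perm p) i m, p ^^ m) (f, p)"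
    using Suc by simp
  also have "\<dots> = (\<lambda>i. orbit_prod G f (inv_perm p) i (Suc m), p ^^ Suc m)"
    by (simp add: wr_mult_Pair inv_fn[OF p] funpow_Suc_right fun_eq_iff orbit_prod_Suc_right[OF f]
        del: funpow.simps orbit_prod.simps(2))
  finally show ?case .
qed

lemma wreath_on_mono: "B \<subseteq> A \<Longrightarrow> carrier (wreath_on G B) \<subseteq> carrier (wreath_on G A)"
  by (auto simp: wreath_on_def intro: permutes_subset)

lemma wreath_on_disjoint_commute:
  assumes "x \<in> carrier (wreath_on G A)" "y \<in> carrier (wreath_on G B)" "A \<inter> B = {}"
  shows "wr_mult G x y = wr_mult G y x"
proof -
  obtain f p f' p' where xy: "x = (f, p)" "y = (f', p')" by fastforce
  note x = wreath_on_carrierD[OF assms(1)[unfolded xy]]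
  note y = wreath_on_carrierD[OF assms(2)[unfolded xy]]
  have pA: "p i \<in> A \<longleftrightarrow> i \<in> A" "inv_perm p i \<in> A \<longleftrightarrow> i \<in> A" for i
    using x(2) by (simp_all add: permutes_in_image permutes_inv)
  have pB: "p' i \<in> B \<longleftrightarrow> i \<in> B" "inv_perm p' i \<in> B \<longleftrightarrow> i \<in> B" for i
    using y(2) by (simp_all add: permutes_in_image permutes_inv)
  have "f i \<otimes> f' (inv_perm p i) = f' i \<otimes> f (inv_perm p' i) \<and> p (p' i) = p' (p i)" for i
  proof (cases "i \<in> A")
    case True
    then have "i \<notin> B" "inv_perm p i \<notin> B" "p i \<notin> B" using assms(3) pA by blast+
    then show ?thesis using x(1) y(3) by simp
  next
    case False
    then have "inv_perm p' i \<notin> A" "p' i \<notin> A"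
      using assms(3) pB y(3)[of i] by (cases "i \<in> B"; fastforce)+
    then show ?thesis using False x(3) y(1) by simp
  qed
  then show ?thesis by (simp add: xy wr_mult_Pair fun_eq_iff)
qed

lemma wreath_on_nat_pow_eq_one:
  assumes "(F, \<sigma>) \<in> carrier (wreath_on G A)" "\<sigma> ^^ k = id"
  shows "(F, \<sigma>) [^]\<^bsub>wreath_on G A\<^esub> (k * order G) = \<one>\<^bsub>wreath_on G A\<^esub>"
proof -
  note F = wreath_on_carrierD[OF assms(1)]
  have "(inv_perm \<sigma> ^^ k) i = i" for i
    using funpow_inv_fixed_iff[OF permutes_bij[OF F(2)]] assms(2) by simp
  then have "orbit_prod G F (inv_perm \<sigma>) i (k * order G) = \<one>" for i
    using orbit_prod_periodic[OF F(1)] pow_order_eq_1 orbit_prod_closed[OF F(1)] by simp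
  moreover have "\<sigma> ^^ (k * order G) = id"
    by (metis assms(2) funpow_mult id_funpow)
  ultimately show ?thesis
    by (simp add: wreath_on_nat_pow[OF assms(1)] fun_eq_iff)
qed

lemma wreath_on_conj_by_base:
  assumes "(F, \<sigma>) \<in> carrier (wreath_on G A)" "(\<epsilon>, id) \<in> carrier (wreath_on G A)"
    and "\<And>m. F m \<otimes> \<epsilon> (inv_perm \<sigma> m) = \<epsilon> m \<otimes> F' m"
  shows "(F, \<sigma>) = (\<epsilon>, id) \<otimes>\<^bsub>wreath_on G A\<^esub> (F', \<sigma>) \<otimes>\<^bsub>wreath_on G A\<^esub> inv\<^bsub>wreath_on G A\<^esub> (\<epsilon>, id)"
proof -
  interpret W: group "wreath_on G A" by (rule wreath_on_group)
  have "(F, \<sigma>) \<otimes>\<^bsub>wreath_on G A\<^esub> (\<epsilon>, id) = (\<epsilon>, id) \<otimes>\<^bsub>wreath_on G A\<^esub> (F', \<sigma>)"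
    using assms(3) by (simp add: wr_mult_Pair fun_eq_iff)
  then show ?thesis
    using assms(1,2) by (metis W.inv_closed W.m_assoc W.r_inv W.r_one)
qed

end

definition wr_restrict :: "('a, 'b) monoid_scheme \<Rightarrow> nat set \<Rightarrow> 'a wr_elem \<Rightarrow> 'a wr_elem" where
  "wr_restrict G B g = (\<lambda>i. if i \<in> B then fst g i else \<one>\<^bsub>G\<^esub>, perm_restrict (snd g) B)"

context group
begin

lemma wr_restrict_closed:
  assumes "(F, \<sigma>) \<in> carrier (wreath_on G A)" "\<sigma> ` B = B"
  shows "wr_restrict G B (F, \<sigma>) \<in> carrier (wreath_on G B)"
  using wreath_on_carrierD[OF assms(1)] perm_restrict_permutes[OF _ assms(2)]
  by (auto simp: wr_restrict_def mem_wreath_on)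

lemma cycle_prod_wr_restrict:
  assumes "(F, \<sigma>) \<in> carrier (wreath_on G A)" "\<sigma> ` B = B" "j \<in> B"
  shows "cycle_prod G (fst (wr_restrict G B (F, \<sigma>))) (snd (wr_restrict G B (F, \<sigma>))) j k = cycle_prod G F \<sigma> j k"
  unfolding cycle_prod_eq_orbit_prod wr_restrict_def fst_conv snd_conv
  using wreath_on_carrierD(2)[OF assms(1)]
  by (intro orbit_prod_transfer[where \<beta> = id, simplified, OF assms(3)])
     (simp add: inv_perm_restrict[OF _ assms(2)] inv_perm_mem_invariant[OF _ assms(2)])

lemma wr_restrict_split:
  assumes "(F, \<sigma>) \<in> carrier (wreath_on G A)" "B \<subseteq> A" "\<sigma> ` B = B"
  shows "wr_mult G (wr_restrict G B (F, \<sigma>)) (wr_restrict G (A - B) (F, \<sigma>)) = (F, \<sigma>)"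
proof -
  note F = wreath_on_carrierD[OF assms(1)]
  have "i \<in> B \<Longrightarrow> inv_perm (perm_restrict \<sigma> B) i \<in> B" for i
    using inv_perm_restrict[OF F(2) assms(3)] inv_perm_mem_invariant[OF F(2) assms(3)] by simp
  moreover have "i \<notin> B \<Longrightarrow> inv_perm (perm_restrict \<sigma> B) i = i" for i
    using permutes_not_in[OF permutes_inv[OF perm_restrict_permutes[OF F(2) assms(3)]]] by blast
  moreover have "i \<in> A - B \<Longrightarrow> \<sigma> i \<in> A - B" for i
    using permutes_image_Diff[OF F(2) assms(3)] by blast
  ultimately show ?thesis
    using F(1) F(3) assms(2)
    by (auto simp: wr_restrict_def wr_mult_Pair perm_restrict_def fun_eq_iff)
qed

lemma nat_pow_root_of_split:
  assumes g: "(F, \<sigma>) \<in> carrier (wreath_on G A)" "B \<subseteq> A" "\<sigma> ` B = B"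
    and h1: "h1 \<in> carrier (wreath_on G B)" "h1 [^]\<^bsub>wreath_on G B\<^esub> (r::nat) = wr_restrict G B (F, \<sigma>)"
    and h2: "h2 \<in> carrier (wreath_on G (A - B))" "h2 [^]\<^bsub>wreath_on G (A - B)\<^esub> r = wr_restrict G (A - B) (F, \<sigma>)"
  shows "\<exists>h\<in>carrier (wreath_on G A). h [^]\<^bsub>wreath_on G A\<^esub> r = (F, \<sigma>)"
proof -
  interpret W: group "wreath_on G A" by (rule wreath_on_group)
  have h12: "h1 \<in> carrier (wreath_on G A)" "h2 \<in> carrier (wreath_on G A)"
    using wreath_on_mono[OF assms(2)] wreath_on_mono[of "A - B" A] h1(1) h2(1) by blast+
  moreover have "h1 \<otimes>\<^bsub>wreath_on G A\<^esub> h2 = h2 \<otimes>\<^bsub>wreath_on G A\<^esub> h1"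
    using wreath_on_disjoint_commute[OF h1(1) h2(1)] by auto
  moreover have "h1 [^]\<^bsub>wreath_on G A\<^esub> r = wr_restrict G B (F, \<sigma>)"
    "h2 [^]\<^bsub>wreath_on G A\<^esub> r = wr_restrict G (A - B) (F, \<sigma>)"
    using h1(2) h2(2) wreath_on_nat_pow_indep[where G = G and A = A] by metis+
  ultimately have "(h1 \<otimes>\<^bsub>wreath_on G A\<^esub> h2) [^]\<^bsub>wreath_on G A\<^esub> r
      = wr_mult G (wr_restrict G B (F, \<sigma>)) (wr_restrict G (A - B) (F, \<sigma>))"
    using W.pow_mult_distrib by simp
  then show ?thesis
    using wr_restrict_split[OF g] W.m_closed[OF h12] by metis
qed

end

definition wr_reindex :: "('a, 'b) monoid_scheme \<Rightarrow> nat set \<Rightarrow> (nat \<Rightarrow> nat) \<Rightarrow> 'a wr_elem \<Rightarrow> 'a wr_elem" where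
  "wr_reindex G A \<beta> x =
     (\<lambda>i. if i \<in> \<beta> ` A then fst x (inv_into A \<beta> i) else \<one>\<^bsub>G\<^esub>,
      \<lambda>i. if i \<in> \<beta> ` A then \<beta> (snd x (inv_into A \<beta> i)) else i)"

lemma reindex_perm_permutes:
  assumes "inj_on \<beta> A" "p permutes A"
  shows "(\<lambda>i. if i \<in> \<beta> ` A then \<beta> (p (inv_into A \<beta> i)) else i) permutes \<beta> ` A"
proof (rule bij_imp_permutes)
  have \<beta>: "bij_betw \<beta> A (\<beta> ` A)" using assms(1) by (rule inj_on_imp_bij_betw)
  have "bij_betw (\<beta> \<circ> (p \<circ> inv_into A \<beta>)) (\<beta> ` A) (\<beta> ` A)"
    by (rule bij_betw_trans[OF bij_betw_trans[OF bij_betw_inv_into[OF \<beta>] permutes_imp_bij[OF assms(2)]] \<beta>])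
  then show "bij_betw (\<lambda>i. if i \<in> \<beta> ` A then \<beta> (p (inv_into A \<beta> i)) else i) (\<beta> ` A) (\<beta> ` A)"
    by (rule bij_betw_cong[THEN iffD1, rotated]) auto
qed auto

lemma inv_perm_reindex_perm:
  assumes "inj_on \<beta> A" "p permutes A"
  shows "inv_perm (\<lambda>i. if i \<in> \<beta> ` A then \<beta> (p (inv_into A \<beta> i)) else i)
       = (\<lambda>i. if i \<in> \<beta> ` A then \<beta> (inv_perm p (inv_into A \<beta> i)) else i)"
proof (rule ext, rule inv_f_eq[OF permutes_inj[OF reindex_perm_permutes[OF assms]]])
  fix i
  show "(\<lambda>i. if i \<in> \<beta> ` A then \<beta> (p (inv_into A \<beta> i)) else i)
      ((\<lambda>i. if i \<in> \<beta> ` A then \<beta> (inv_perm p (inv_into A \<beta> i)) else i) i) = i"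
  proof (cases "i \<in> \<beta> ` A")
    case True
    define a where "a = inv_perm p (inv_into A \<beta> i)"
    have "a \<in> A"
      using True permutes_in_image[OF permutes_inv[OF assms(2)]] inv_into_into[of i \<beta> A] by (simp add: a_def)
    moreover have "p a = inv_into A \<beta> i"
      using permutes_inverses(1)[OF assms(2)] by (simp add: a_def)
    ultimately show ?thesis
      using True assms(1) by (simp add: a_def[symmetric] f_inv_into_f)
  qed simp
qed

context group
begin

lemma wr_reindex_hom:
  assumes "inj_on \<beta> A"
  shows "wr_reindex G A \<beta> \<in> hom (wreath_on G A) (wreath_on G (\<beta> ` A))"
proof (rule homI)
  fix x assume x: "x \<in> carrier (wreath_on G A)"
  obtain f p where "x = (f, p)" by fastforce
  note fp = wreath_on_carrierD[OF x[unfolded this]]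
  show "wr_reindex G A \<beta> x \<in> carrier (wreath_on G (\<beta> ` A))"
    unfolding \<open>x = _\<close> wr_reindex_def fst_conv snd_conv mem_wreath_on
    using fp(1) reindex_perm_permutes[OF assms fp(2)] by simp
next
  fix x y assume "x \<in> carrier (wreath_on G A)" "y \<in> carrier (wreath_on G A)"
  moreover obtain f p f' p' where "x = (f, p)" "y = (f', p')" by fastforce
  ultimately have p: "p permutes A" "p' permutes A" using wreath_on_carrierD by blast+
  have "inv_perm p (inv_into A \<beta> i) \<in> A" "p' (inv_into A \<beta> i) \<in> A" if "i \<in> \<beta> ` A" for i
    using that inv_into_into[of i \<beta> A] permutes_in_image[OF permutes_inv[OF p(1)]] permutes_in_image[OF p(2)]
    by blast+
  then have "\<beta> (inv_perm p (inv_into A \<beta> i)) \<in> \<beta> ` A \<and> inv_into A \<beta> (\<beta> (inv_perm p (inv_into A \<beta> i))) = inv_perm p (inv_into A \<beta> i)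
      \<and> \<beta> (p' (inv_into A \<beta> i)) \<in> \<beta> ` A \<and> inv_into A \<beta> (\<beta> (p' (inv_into A \<beta> i))) = p' (inv_into A \<beta> i)"
    if "i \<in> \<beta> ` A" for i
    using that assms by simp
  then show "wr_reindex G A \<beta> (x \<otimes>\<^bsub>wreath_on G A\<^esub> y)
      = wr_reindex G A \<beta> x \<otimes>\<^bsub>wreath_on G (\<beta> ` A)\<^esub> wr_reindex G A \<beta> y"
    unfolding \<open>x = _\<close> \<open>y = _\<close> wreath_on_mult wr_reindex_def wr_mult_Pair fst_conv snd_conv
      inv_perm_reindex_perm[OF assms p(1)] prod.inject fun_eq_iff
    by simp
qed

lemma nat_pow_root_reindex:
  assumes "inj_on \<beta> A" "h \<in> carrier (wreath_on G A)"
  shows "wr_reindex G A \<beta> h \<in> carrier (wreath_on G (\<beta> ` A))"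
    and "wr_reindex G A \<beta> h [^]\<^bsub>wreath_on G (\<beta> ` A)\<^esub> (r::nat) = wr_reindex G A \<beta> (h [^]\<^bsub>wreath_on G A\<^esub> r)"
  using hom_in_carrier[OF wr_reindex_hom[OF assms(1)] assms(2)]
    hom_nat_pow[OF wr_reindex_hom[OF assms(1)] assms(2) wreath_on_group wreath_on_group]
  by simp_all

end

section \<open>Types and their divisibility\<close>

definition type_points :: "('a, 'b) monoid_scheme \<Rightarrow> nat set \<Rightarrow> 'a wr_elem \<Rightarrow> 'a set \<Rightarrow> nat \<Rightarrow> nat set" where
  "type_points G A g C k = {j\<in>A. card (perm_cycle (snd g) j) = k \<and> cycle_prod G (fst g) (snd g) j k \<in> C}"

definition cycle_type :: "('a, 'b) monoid_scheme \<Rightarrow> nat set \<Rightarrow> 'a wr_elem \<Rightarrow> 'a set \<Rightarrow> nat \<Rightarrow> nat" where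
  "cycle_type G A g C k = card {c. \<exists>j\<in>A. c = perm_cycle (snd g) j \<and> card c = k \<and> cycle_prod G (fst g) (snd g) j k \<in> C}"

lemma wr_type_eq_cycle_type: "wr_type G n g C k = cycle_type G {1..n} g C k"
  unfolding wr_type_def cycle_type_def ..

context group
begin

lemma cycle_prod_step_mem_iff:
  assumes "(F, \<sigma>) \<in> carrier (wreath_on G A)" "finite A" "C \<in> conj_classes G" "card (perm_cycle \<sigma> i) = k"
  shows "cycle_prod G F \<sigma> (\<sigma> i) k \<in> C \<longleftrightarrow> cycle_prod G F \<sigma> i k \<in> C"
proof -
  have F: "\<And>i. F i \<in> carrier G" and "\<sigma> permutes A" using wreath_on_carrierD[OF assms(1)] by auto
  then have \<sigma>: "permutation \<sigma>" "bij \<sigma>" using assms(2) permutation_permutes permutes_bij by blast+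
  have "(\<sigma> ^^ k) i = i"
    using least_power_of_permutation(1)[OF \<sigma>(1), of i] assms(4) card_perm_cycle[OF \<sigma>(1)] by simp
  then have "(\<sigma> ^^ k) (\<sigma> i) = \<sigma> i" by (metis funpow_swap1)
  then have "(inv_perm \<sigma> ^^ k) (\<sigma> i) = \<sigma> i" using funpow_inv_fixed_iff[OF \<sigma>(2)] by blast
  moreover have "inv_perm \<sigma> (\<sigma> i) = i" using \<sigma>(2) by (simp add: bij_is_inj)
  ultimately have "orbit_prod G F (inv_perm \<sigma>) i k
      = inv (F (\<sigma> i)) \<otimes> orbit_prod G F (inv_perm \<sigma>) (\<sigma> i) k \<otimes> F (\<sigma> i)"
    using orbit_prod_shift_start[OF F, where q = "inv_perm \<sigma>" and k = k and j = "\<sigma> i"] by simp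
  then show ?thesis
    using conj_classes_conj_iff[OF assms(3) orbit_prod_closed[OF F] F] by (simp add: cycle_prod_eq_orbit_prod)
qed

lemma cycle_type_mult_eq_card_type_points:
  assumes "g \<in> carrier (wreath_on G A)" "finite A" "C \<in> conj_classes G"
  shows "cycle_type G A g C k * k = card (type_points G A g C k)"
proof -
  obtain F \<sigma> where g: "g = (F, \<sigma>)" by fastforce
  note gF = assms(1)[unfolded g]
  have "card {c. \<exists>j\<in>A. c = perm_cycle \<sigma> j \<and> card c = k \<and> cycle_prod G F \<sigma> j k \<in> C} * k
      = card {j\<in>A. card (perm_cycle \<sigma> j) = k \<and> cycle_prod G F \<sigma> j k \<in> C}"
    by (rule card_cycles_mult_length[OF wreath_on_carrierD(2)[OF gF] assms(2)])
       (rule cycle_prod_step_mem_iff[OF gF assms(2,3)])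
  then show ?thesis unfolding cycle_type_def type_points_def g by simp
qed

lemma type_points_funpow:
  assumes "(F, \<sigma>) \<in> carrier (wreath_on G A)" "finite A" "C \<in> conj_classes G"
    and "i \<in> type_points G A (F, \<sigma>) C k"
  shows "(\<sigma> ^^ t) i \<in> type_points G A (F, \<sigma>) C k"
proof -
  have i: "i \<in> A" "card (perm_cycle \<sigma> i) = k" "cycle_prod G F \<sigma> i k \<in> C"
    using assms(4) unfolding type_points_def by auto
  have "(\<sigma> ^^ t) i \<in> A \<and> card (perm_cycle \<sigma> ((\<sigma> ^^ t) i)) = k \<and> cycle_prod G F \<sigma> ((\<sigma> ^^ t) i) k \<in> C"
    by (rule funpow_preserves_cycle_property[where Q = "\<lambda>j. cycle_prod G F \<sigma> j k \<in> C",
          OF wreath_on_carrierD(2)[OF assms(1)] assms(2) cycle_prod_step_mem_iff[OF assms(1-3)] i])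
  then show ?thesis unfolding type_points_def by simp
qed

lemma type_points_class_unique:
  assumes "C \<in> conj_classes G" "C' \<in> conj_classes G"
    and "j \<in> type_points G A g C k" "j \<in> type_points G A g C' k'"
  shows "C = C' \<and> k = k'"
proof -
  have "k = k'" using assms(3,4) by (simp add: type_points_def)
  then show ?thesis
    using assms(3,4) conj_classes_eq[OF assms(1)] conj_classes_eq[OF assms(2)]
    unfolding type_points_def by (metis (no_types, lifting) mem_Collect_eq)
qed

lemma type_points_wr_restrict:
  assumes "(F, \<sigma>) \<in> carrier (wreath_on G A)" "B \<subseteq> A" "\<sigma> ` B = B"
  shows "type_points G B (wr_restrict G B (F, \<sigma>)) C k = type_points G A (F, \<sigma>) C k \<inter> B"
  using assms(2) cycle_prod_wr_restrict[OF assms(1,3)] perm_cycle_perm_restrict[OF assms(3)]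
  unfolding type_points_def by (auto simp: wr_restrict_def)

lemma type_points_nat_pow:
  assumes h: "h \<in> carrier (wreath_on G A)" and "finite A" "Factorial_Ring.prime r" "r dvd k"
  shows "type_points G A (h [^]\<^bsub>wreath_on G A\<^esub> r) C k = type_points G A h C (r * k)"
proof -
  obtain f p where hp: "h = (f, p)" by fastforce
  have f: "\<And>i. f i \<in> carrier G" and "p permutes A" using wreath_on_carrierD[OF h[unfolded hp]] by auto
  then have p: "permutation p" "bij p" using assms(2) permutation_permutes permutes_bij by blast+
  have "card (perm_cycle (p ^^ r) j) = k \<longleftrightarrow> card (perm_cycle p j) = r * k" for j
    using least_power_funpow_prime_eq_iff[OF p(1) assms(3,4)]
    by (simp add: card_perm_cycle p(1) permutation_funpow)
  moreover have "cycle_prod G (\<lambda>i. orbit_prod G f (inv_perm p) i r) (p ^^ r) j k = cycle_prod G f p j (r * k)" for j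
    unfolding cycle_prod_eq_orbit_prod inv_fn[OF p(2)] by (rule orbit_prod_blocks[OF f])
  ultimately show ?thesis
    unfolding type_points_def hp wreath_on_nat_pow[OF h[unfolded hp]] by simp
qed

lemma dvd_card_type_points_nat_pow:
  assumes h: "h \<in> carrier (wreath_on G A)" and "finite A" "Factorial_Ring.prime r" "r dvd k"
    and "C \<in> conj_classes G"
  shows "r * k dvd card (type_points G A (h [^]\<^bsub>wreath_on G A\<^esub> r) C k)"
  using cycle_type_mult_eq_card_type_points[OF h assms(2,5), of "r * k"]
  by (metis type_points_nat_pow[OF assms(1-4)] dvd_triv_right)

end

definition type_divisible :: "('a, 'b) monoid_scheme \<Rightarrow> nat \<Rightarrow> nat set \<Rightarrow> 'a wr_elem \<Rightarrow> bool" where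
  "type_divisible G r A g \<longleftrightarrow>
     (\<forall>C\<in>conj_classes G. \<forall>k>0. r dvd k \<longrightarrow> r * k dvd card (type_points G A g C k))"

context group
begin

lemma type_divisible_nat_pow:
  assumes "h \<in> carrier (wreath_on G A)" "finite A" "Factorial_Ring.prime r"
  shows "type_divisible G r A (h [^]\<^bsub>wreath_on G A\<^esub> r)"
  using dvd_card_type_points_nat_pow[OF assms] by (simp add: type_divisible_def)

lemma type_divisible_iff_cycle_type:
  assumes "g \<in> carrier (wreath_on G A)" "finite A"
  shows "type_divisible G r A g \<longleftrightarrow>
    (\<forall>C\<in>conj_classes G. \<forall>k\<in>{1..card A}. r dvd k \<longrightarrow> r dvd cycle_type G A g C k)"
proof -
  obtain F \<sigma> where g: "g = (F, \<sigma>)" by fastforce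
  have empty: "type_points G A g C k = {}" if "card A < k" for C k
  proof -
    have "card (perm_cycle \<sigma> j) \<le> card A" if "j \<in> A" for j
      using card_mono[OF assms(2) perm_cycle_subset[OF wreath_on_carrierD(2)[OF assms(1)[unfolded g]] that]] .
    then show ?thesis using that by (force simp: type_points_def g)
  qed
  have iff: "r * k dvd card (type_points G A g C k) \<longleftrightarrow> r dvd cycle_type G A g C k"
    if "C \<in> conj_classes G" "0 < k" for C k
  proof -
    have "r * k dvd card (type_points G A g C k) \<longleftrightarrow> k * r dvd k * cycle_type G A g C k"
      using cycle_type_mult_eq_card_type_points[OF assms that(1), of k] by (simp add: mult.commute)
    also have "\<dots> \<longleftrightarrow> r dvd cycle_type G A g C k" using that(2) by (rule nat_mult_dvd_cancel1)
    finally show ?thesis .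
  qed
  show ?thesis
  proof
    assume "type_divisible G r A g"
    then show "\<forall>C\<in>conj_classes G. \<forall>k\<in>{1..card A}. r dvd k \<longrightarrow> r dvd cycle_type G A g C k"
      using iff by (simp add: type_divisible_def)
  next
    assume R: "\<forall>C\<in>conj_classes G. \<forall>k\<in>{1..card A}. r dvd k \<longrightarrow> r dvd cycle_type G A g C k"
    show "type_divisible G r A g"
      unfolding type_divisible_def
    proof (intro ballI allI impI)
      fix C k assume "C \<in> conj_classes G" "0 < k" "r dvd k"
      then show "r * k dvd card (type_points G A g C k)"
        using R iff empty[of k C] by (cases "k \<le> card A") simp_all
    qed
  qed
qed

lemma type_divisible_Diff:
  assumes div: "type_divisible G r A (F, \<sigma>)" and g: "(F, \<sigma>) \<in> carrier (wreath_on G A)" "finite A"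
    and B: "B \<subseteq> A" "\<sigma> ` B = B"
    and divB: "\<And>C k. C \<in> conj_classes G \<Longrightarrow> 0 < k \<Longrightarrow> r dvd k \<Longrightarrow> r * k dvd card (type_points G A (F, \<sigma>) C k \<inter> B)"
  shows "type_divisible G r (A - B) (wr_restrict G (A - B) (F, \<sigma>))"
  unfolding type_divisible_def
proof (intro ballI allI impI)
  fix C k assume C: "C \<in> conj_classes G" and k: "0 < k" "r dvd k"
  let ?T = "type_points G A (F, \<sigma>) C k"
  have "?T \<subseteq> A" "finite ?T" using g(2) by (auto simp: type_points_def)
  have "type_points G (A - B) (wr_restrict G (A - B) (F, \<sigma>)) C k = ?T - (?T \<inter> B)"
    using type_points_wr_restrict[OF g(1) _ permutes_image_Diff[OF wreath_on_carrierD(2)[OF g(1)] B(2)]]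
      \<open>?T \<subseteq> A\<close> by auto
  then show "r * k dvd card (type_points G (A - B) (wr_restrict G (A - B) (F, \<sigma>)) C k)"
    using div C k divB[OF C k] \<open>finite ?T\<close>
    by (simp add: type_divisible_def card_Diff_subset_Int dvd_diff_nat)
qed

end

section \<open>Roots on blocks of cycles\<close>

context group
begin

text \<open>The restriction has order dividing the cycle length times order G, which is prime to r.\<close>

lemma nat_pow_root_on_coprime_cycle:
  assumes g: "(F, \<sigma>) \<in> carrier (wreath_on G A)" "finite A" "j \<in> A"
    and r: "Factorial_Ring.prime r" "\<not> r dvd least_power \<sigma> j" "\<not> r dvd order G"
  defines "D \<equiv> perm_cycle \<sigma> j"
  shows "\<exists>h\<in>carrier (wreath_on G D). h [^]\<^bsub>wreath_on G D\<^esub> r = wr_restrict G D (F, \<sigma>)"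
proof -
  interpret W: group "wreath_on G D" by (rule wreath_on_group)
  note F = wreath_on_carrierD[OF g(1)]
  have \<sigma>: "permutation \<sigma>" using F(2) g(2) permutation_permutes by blast
  have "\<sigma> ` D = D" unfolding D_def by (rule perm_cycle_image[OF F(2) g(2)])
  note x = wr_restrict_closed[OF g(1) this]
  define k where "k = least_power \<sigma> j"
  have "(\<sigma> ^^ k) i = i" if "i \<in> D" for i
  proof -
    have "card (perm_cycle \<sigma> i) = card (perm_cycle \<sigma> j)"
      using perm_cycle_eqI[OF \<sigma>] that by (simp add: D_def)
    then have "least_power \<sigma> i = k" by (simp add: card_perm_cycle[OF \<sigma>] k_def)
    then show ?thesis using least_power_of_permutation(1)[OF \<sigma>, of i] by simp
  qed
  then have "(perm_restrict \<sigma> D ^^ k) i = i" for i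
    using funpow_perm_restrict[OF \<open>\<sigma> ` D = D\<close>, of i k]
      permutes_not_in[OF permutes_funpow[OF perm_restrict_permutes[OF F(2) \<open>\<sigma> ` D = D\<close>]], of i k]
    by (cases "i \<in> D") simp_all
  then have "perm_restrict \<sigma> D ^^ k = id" by (simp add: fun_eq_iff)
  then have "wr_restrict G D (F, \<sigma>) [^]\<^bsub>wreath_on G D\<^esub> (k * order G) = \<one>\<^bsub>wreath_on G D\<^esub>"
    using wreath_on_nat_pow_eq_one x by (simp add: wr_restrict_def)
  moreover have "coprime r (k * order G)"
    using r by (simp add: k_def prime_imp_coprime)
  ultimately show ?thesis using W.nat_pow_root_if_coprime[OF x] by blast
qed

lemma orbit_prod_rot_single:
  assumes "c \<in> carrier G" "m < N" "v \<le> N"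
  shows "orbit_prod G (\<lambda>i. if i = 0 then c else \<one>) (rot N (N - 1)) m v = (if m < v then c else \<one>)"
  using assms(2,3)
proof (induction v arbitrary: m)
  case (Suc v)
  have "rot N (N - 1) m = (if m = 0 then N - 1 else m - 1)"
    using Suc.prems by (auto simp: rot_eq_add rot_eq_add_sub)
  then show ?case using Suc assms(1) by auto
qed simp

lemma rot_nat_pow:
  assumes "c \<in> carrier G" "0 < r" "r \<le> N"
  shows "(\<lambda>i. if i = 0 then c else \<one>, rot N 1) [^]\<^bsub>wreath_on G {0..<N}\<^esub> r
       = (\<lambda>i. if i < r then c else \<one>, rot N r)"
proof -
  have h: "(\<lambda>i. if i = 0 then c else \<one>, rot N 1) \<in> carrier (wreath_on G {0..<N})"
    using assms rot_permutes[of 1 N] by (auto simp: mem_wreath_on)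
  have "orbit_prod G (\<lambda>i. if i = 0 then c else \<one>) (rot N (N - 1)) m r = (if m < r then c else \<one>)" for m
  proof (cases "m < N")
    case False
    then have "rot N (N - 1) m = m" by (simp add: rot_def)
    then have "orbit_prod G (\<lambda>i. if i = 0 then c else \<one>) (rot N (N - 1)) m v = \<one>" for v
      using False assms(2,3) by (induction v) auto
    then show ?thesis using False assms(3) by simp
  qed (rule orbit_prod_rot_single[OF assms(1) _ assms(3)])
  then show ?thesis
    using assms unfolding wreath_on_nat_pow[OF h] funpow_rot by (simp add: inv_perm_rot)
qed

text \<open>Conjugating by a base element concentrates each cycle product at the first point of its
  cycle; the conjugator is read off from the partial products along the cycles.\<close>

lemma rot_conj_concentrated:
  assumes r: "0 < r" and k: "0 < k" and N: "N = r * k"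
    and g: "(F, rot N r) \<in> carrier (wreath_on G {0..<N})"
    and conj: "\<And>u. u < r \<Longrightarrow> \<exists>z\<in>carrier G.
      orbit_prod G F (rot N (N - r)) u k = z \<otimes> orbit_prod G F (rot N (N - r)) 0 k \<otimes> inv z"
  obtains \<epsilon> where "(\<epsilon>, id) \<in> carrier (wreath_on G {0..<N})"
    "(F, rot N r) = (\<epsilon>, id) \<otimes>\<^bsub>wreath_on G {0..<N}\<^esub>
       (\<lambda>i. if i < r then orbit_prod G F (rot N (N - r)) 0 k else \<one>, rot N r)
       \<otimes>\<^bsub>wreath_on G {0..<N}\<^esub> inv\<^bsub>wreath_on G {0..<N}\<^esub> (\<epsilon>, id)"
proof -
  have "r \<le> N" using N k by simp
  define q where "q = rot N (N - r)"
  note F = wreath_on_carrierD[OF g]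
  define c where "c = orbit_prod G F q 0 k"
  obtain y where y: "\<And>u. u < r \<Longrightarrow> y u \<in> carrier G \<and> orbit_prod G F q u k = y u \<otimes> c \<otimes> inv (y u)"
    using conj unfolding q_def c_def by metis
  define \<epsilon> where "\<epsilon> m = (if m < N then orbit_prod G F q m (m div r) \<otimes> y (m mod r) else \<one>)" for m
  have \<epsilon>: "\<epsilon> m \<in> carrier G" for m
    using y[of "m mod r"] r by (simp add: \<epsilon>_def orbit_prod_closed[OF F(1)])
  have "\<epsilon> m = \<one>" if "\<not> m < N" for m using that by (simp add: \<epsilon>_def)
  with \<epsilon> have e: "(\<epsilon>, id) \<in> carrier (wreath_on G {0..<N})"
    by (auto simp: mem_wreath_on permutes_id)
  have "F m \<otimes> \<epsilon> (q m) = \<epsilon> m \<otimes> (if m < r then c else \<one>)" for m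
  proof (cases "m < N")
    case False
    then show ?thesis using F(3)[of m] \<open>r \<le> N\<close> by (simp add: q_def rot_def \<epsilon>_def)
  next
    case True
    have "m < r * k" using True N by simp
    note rot_back = rot_back_div_mod[OF r k this]
    have "F m \<otimes> \<epsilon> (q m) = (F m \<otimes> orbit_prod G F q (q m) (q m div r)) \<otimes> y (m mod r)"
      using True rot_back(1) y[of "m mod r"] r F(1)
      by (simp add: \<epsilon>_def q_def N rot_less m_assoc orbit_prod_closed)
    also have "\<dots> = orbit_prod G F q m (Suc (q m div r)) \<otimes> y (m mod r)"
      by simp
    also have "Suc (q m div r) = (if r \<le> m then m div r else k)"
      using rot_back(2) by (simp add: q_def N)
    finally show ?thesis
      using True y[of m] \<epsilon>[of m] by (auto simp: \<epsilon>_def c_def m_assoc orbit_prod_closed[OF F(1)])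
  qed
  then have "(F, rot N r) = (\<epsilon>, id) \<otimes>\<^bsub>wreath_on G {0..<N}\<^esub> (\<lambda>i. if i < r then c else \<one>, rot N r)
      \<otimes>\<^bsub>wreath_on G {0..<N}\<^esub> inv\<^bsub>wreath_on G {0..<N}\<^esub> (\<epsilon>, id)"
    using \<open>r \<le> N\<close> by (intro wreath_on_conj_by_base[OF g e]) (simp add: q_def inv_perm_rot)
  then show ?thesis using that[OF e] unfolding c_def q_def by blast
qed

text \<open>Once the cycle products are concentrated, the element is the r-th power of c at 0 followed by
  rotation by 1.\<close>

lemma rot_nat_pow_root:
  assumes r: "0 < r" and k: "0 < k" and N: "N = r * k"
    and g: "(F, rot N r) \<in> carrier (wreath_on G {0..<N})"
    and conj: "\<And>u. u < r \<Longrightarrow> \<exists>z\<in>carrier G.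
      orbit_prod G F (rot N (N - r)) u k = z \<otimes> orbit_prod G F (rot N (N - r)) 0 k \<otimes> inv z"
  shows "\<exists>h\<in>carrier (wreath_on G {0..<N}). h [^]\<^bsub>wreath_on G {0..<N}\<^esub> r = (F, rot N r)"
proof -
  interpret W: group "wreath_on G {0..<N}" by (rule wreath_on_group)
  have "r \<le> N" using N k by simp
  define c where "c = orbit_prod G F (rot N (N - r)) 0 k"
  have c: "c \<in> carrier G" unfolding c_def by (rule orbit_prod_closed[OF wreath_on_carrierD(1)[OF g]])
  obtain \<epsilon> where e: "(\<epsilon>, id) \<in> carrier (wreath_on G {0..<N})"
    and g_conj: "(F, rot N r) = (\<epsilon>, id) \<otimes>\<^bsub>wreath_on G {0..<N}\<^esub> (\<lambda>i. if i < r then c else \<one>, rot N r)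
       \<otimes>\<^bsub>wreath_on G {0..<N}\<^esub> inv\<^bsub>wreath_on G {0..<N}\<^esub> (\<epsilon>, id)"
    using rot_conj_concentrated[OF assms] unfolding c_def by blast
  define h0 where "h0 = (\<lambda>i::nat. if i = 0 then c else \<one>, rot N 1)"
  have h0: "h0 \<in> carrier (wreath_on G {0..<N})"
    using c rot_permutes[of 1 N] \<open>r \<le> N\<close> r by (auto simp: h0_def mem_wreath_on)
  have "(F, rot N r) = ((\<epsilon>, id) \<otimes>\<^bsub>wreath_on G {0..<N}\<^esub> h0 \<otimes>\<^bsub>wreath_on G {0..<N}\<^esub> inv\<^bsub>wreath_on G {0..<N}\<^esub> (\<epsilon>, id))
      [^]\<^bsub>wreath_on G {0..<N}\<^esub> r"
    using g_conj W.conj_nat_pow[OF e h0] rot_nat_pow[OF c r \<open>r \<le> N\<close>] by (simp add: h0_def)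
  moreover have "(\<epsilon>, id) \<otimes>\<^bsub>wreath_on G {0..<N}\<^esub> h0 \<otimes>\<^bsub>wreath_on G {0..<N}\<^esub> inv\<^bsub>wreath_on G {0..<N}\<^esub> (\<epsilon>, id)
      \<in> carrier (wreath_on G {0..<N})"
    using e h0 by (simp del: wreath_on_mult)
  ultimately show ?thesis by (metis (no_types))
qed

lemma nat_pow_root_transport:
  assumes g: "(F, \<sigma>) \<in> carrier (wreath_on G A)" and r: "0 < r" and k: "0 < k" and N: "N = r * k"
    and \<beta>: "inj_on \<beta> {0..<N}"
    and comm: "\<And>m. m < N \<Longrightarrow> \<sigma> (\<beta> m) = \<beta> (rot N r m)"
    and conj: "\<And>u. u < r \<Longrightarrow> \<exists>z\<in>carrier G. cycle_prod G F \<sigma> (\<beta> u) k = z \<otimes> cycle_prod G F \<sigma> (\<beta> 0) k \<otimes> inv z"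
  shows "\<exists>h\<in>carrier (wreath_on G (\<beta> ` {0..<N})). h [^]\<^bsub>wreath_on G (\<beta> ` {0..<N})\<^esub> r
           = wr_restrict G (\<beta> ` {0..<N}) (F, \<sigma>)"
proof -
  note F = wreath_on_carrierD[OF g]
  have "r \<le> N" "0 < N" using N r k by simp_all
  define F' where "F' m = (if m < N then F (\<beta> m) else \<one>)" for m
  have g': "(F', rot N r) \<in> carrier (wreath_on G {0..<N})"
    using F(1) rot_permutes[OF \<open>r \<le> N\<close>] by (simp add: mem_wreath_on F'_def)
  define q where "q = rot N (N - r)"
  have "inv_perm \<sigma> (\<beta> x) = \<beta> (q x)" if "x < N" for x
  proof -
    have "\<sigma> (\<beta> (q x)) = \<beta> x"
      using comm[of "q x"] that \<open>r \<le> N\<close> by (simp add: q_def rot_less rot_rot rot_N)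
    then show ?thesis using permutes_inj[OF F(2)] by (simp add: inv_f_eq)
  qed
  then have "orbit_prod G F' q u k = cycle_prod G F \<sigma> (\<beta> u) k" if "u < N" for u
    unfolding cycle_prod_eq_orbit_prod
    by (intro orbit_prod_transfer[where M = "{0..<N}"]) (use that in \<open>simp_all add: F'_def q_def rot_less\<close>)
  then have "\<exists>z\<in>carrier G. orbit_prod G F' q u k = z \<otimes> orbit_prod G F' q 0 k \<otimes> inv z" if "u < r" for u
    using conj[OF that] that \<open>r \<le> N\<close> \<open>0 < N\<close> by simp
  then obtain h where h: "h \<in> carrier (wreath_on G {0..<N})" "h [^]\<^bsub>wreath_on G {0..<N}\<^esub> r = (F', rot N r)"
    using rot_nat_pow_root[OF r k N g'] unfolding q_def by blast
  have "wr_reindex G {0..<N} \<beta> (F', rot N r) = wr_restrict G (\<beta> ` {0..<N}) (F, \<sigma>)"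
    using \<beta> comm inv_into_into[of _ \<beta> "{0..<N}"]
    by (auto simp: wr_reindex_def wr_restrict_def F'_def perm_restrict_def f_inv_into_f fun_eq_iff)
  then show ?thesis
    using nat_pow_root_reindex[OF \<beta> h(1)] h(2) by metis
qed

lemma nat_pow_root_on_equal_cycles:
  assumes g: "(F, \<sigma>) \<in> carrier (wreath_on G A)" "finite A" and r: "0 < r" and k: "0 < k"
    and a: "\<And>u. u < r \<Longrightarrow> a u \<in> A \<and> least_power \<sigma> (a u) = k"
    and distinct: "inj_on (\<lambda>u. perm_cycle \<sigma> (a u)) {..<r}"
    and conj: "\<And>u. u < r \<Longrightarrow> \<exists>z\<in>carrier G. cycle_prod G F \<sigma> (a u) k = z \<otimes> cycle_prod G F \<sigma> (a 0) k \<otimes> inv z"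
  obtains B where "B \<subseteq> (\<Union>u<r. perm_cycle \<sigma> (a u))" "card B = r * k" "\<sigma> ` B = B"
    "\<exists>h\<in>carrier (wreath_on G B). h [^]\<^bsub>wreath_on G B\<^esub> r = wr_restrict G B (F, \<sigma>)"
proof
  note F = wreath_on_carrierD[OF g(1)]
  have \<sigma>: "permutation \<sigma>" using F(2) g(2) permutation_permutes by blast
  define \<beta> where "\<beta> = interleave \<sigma> a r"
  define B where "B = \<beta> ` {0..<r * k}"
  have inj: "inj_on \<beta> {0..<r * k}"
    unfolding \<beta>_def using inj_on_interleave[OF \<sigma> r _ distinct] a by blast
  have comm: "\<sigma> (\<beta> m) = \<beta> (rot (r * k) r m)" if "m < r * k" for m
    unfolding \<beta>_def using interleave_rot[OF _ r that] a least_power_of_permutation(1)[OF \<sigma>] by metis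
  have cycle: "\<beta> m \<in> perm_cycle \<sigma> (a (m mod r))" for m
    by (simp add: \<beta>_def interleave_def funpow_in_perm_cycle)
  show "B \<subseteq> (\<Union>u<r. perm_cycle \<sigma> (a u))"
    using cycle r by (auto simp: B_def intro!: UN_I[of "_ mod r"])
  show "card B = r * k" using inj by (simp add: B_def card_image)
  show "\<sigma> ` B = B"
    using F(2) comm rot_less[of _ "r * k" r] by (intro permutes_image_eqI) (auto simp: B_def)
  have "\<beta> u = a u" if "u < r" for u using that by (simp add: \<beta>_def interleave_def)
  then show "\<exists>h\<in>carrier (wreath_on G B). h [^]\<^bsub>wreath_on G B\<^esub> r = wr_restrict G B (F, \<sigma>)"
    using nat_pow_root_transport[OF g(1) r k refl inj comm] conj r unfolding B_def by simp
qed

end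

section \<open>The root criterion\<close>

definition rootable_block :: "('a, 'b) monoid_scheme \<Rightarrow> nat \<Rightarrow> nat set \<Rightarrow> 'a wr_elem \<Rightarrow> nat set \<Rightarrow> bool" where
  "rootable_block G r A g B \<longleftrightarrow> B \<noteq> {} \<and> B \<subseteq> A \<and> snd g ` B = B \<and>
     (\<exists>h\<in>carrier (wreath_on G B). h [^]\<^bsub>wreath_on G B\<^esub> r = wr_restrict G B g) \<and>
     (\<forall>C\<in>conj_classes G. \<forall>k>0. r dvd k \<longrightarrow> r * k dvd card (type_points G A g C k \<inter> B))"

context group
begin

lemma rootable_block_coprime_cycle:
  assumes g: "(F, \<sigma>) \<in> carrier (wreath_on G A)" "finite A" "j \<in> A"
    and r: "Factorial_Ring.prime r" "\<not> r dvd least_power \<sigma> j" "\<not> r dvd order G"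
  shows "rootable_block G r A (F, \<sigma>) (perm_cycle \<sigma> j)"
proof -
  note F = wreath_on_carrierD[OF g(1)]
  have \<sigma>: "permutation \<sigma>" using F(2) g(2) permutation_permutes by blast
  have "card (perm_cycle \<sigma> i) = least_power \<sigma> j" if "i \<in> perm_cycle \<sigma> j" for i
    using perm_cycle_eqI[OF \<sigma> that] card_perm_cycle[OF \<sigma>] by simp
  then have "type_points G A (F, \<sigma>) C k \<inter> perm_cycle \<sigma> j = {}" if "r dvd k" for C k
    using that r(2) by (auto simp: type_points_def)
  then show ?thesis
    using self_in_perm_cycle[of j \<sigma>] perm_cycle_subset[OF F(2) g(3)] perm_cycle_image[OF F(2) g(2)]
      nat_pow_root_on_coprime_cycle[OF g r]
    by (auto simp: rootable_block_def)
qed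

lemma obtain_equal_cycles:
  assumes g: "(F, \<sigma>) \<in> carrier (wreath_on G A)" "finite A" "j \<in> A"
    and div: "type_divisible G r A (F, \<sigma>)" and r: "\<And>i. i \<in> A \<Longrightarrow> r dvd least_power \<sigma> i"
  obtains k C a where "0 < k" "C \<in> conj_classes G"
    "\<And>u. u < r \<Longrightarrow> a u \<in> type_points G A (F, \<sigma>) C k" "inj_on (\<lambda>u. perm_cycle \<sigma> (a u)) {..<r}"
proof -
  note F = wreath_on_carrierD[OF g(1)]
  have \<sigma>: "permutation \<sigma>" using F(2) g(2) permutation_permutes by blast
  define k where "k = least_power \<sigma> j"
  define C where "C = conj_class G (cycle_prod G F \<sigma> j k)"
  define J where "J = type_points G A (F, \<sigma>) C k"
  have "0 < k" "r dvd k" using least_power_of_permutation(2)[OF \<sigma>] r g(3) by (auto simp: k_def)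
  have "cycle_prod G F \<sigma> j k \<in> carrier G"
    unfolding cycle_prod_eq_orbit_prod by (rule orbit_prod_closed[OF F(1)])
  then have C: "C \<in> conj_classes G" "cycle_prod G F \<sigma> j k \<in> C"
    by (simp_all add: C_def conj_classes_def conj_class_self)
  then have "j \<in> J" using g(3) by (simp add: J_def type_points_def k_def card_perm_cycle[OF \<sigma>])
  moreover have "finite J" using g(2) by (simp add: J_def type_points_def)
  moreover have "r * k dvd card J" using div C(1) \<open>0 < k\<close> \<open>r dvd k\<close> by (simp add: type_divisible_def J_def)
  ultimately have "r * k \<le> card J" by (auto intro: dvd_imp_le simp: card_gt_0_iff)
  then have "r * k \<le> cycle_type G A (F, \<sigma>) C k * k"
    using cycle_type_mult_eq_card_type_points[OF g(1,2) C(1), of k] by (simp add: J_def)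
  then have "r \<le> cycle_type G A (F, \<sigma>) C k" using \<open>0 < k\<close> by simp
  moreover have "{c. \<exists>j\<in>A. c = perm_cycle \<sigma> j \<and> card c = k \<and> cycle_prod G F \<sigma> j k \<in> C}
      = {c. \<exists>j\<in>A. c = perm_cycle \<sigma> j \<and> j \<in> J}"
    by (auto simp: J_def type_points_def)
  ultimately have "r \<le> card {c. \<exists>j\<in>A. c = perm_cycle \<sigma> j \<and> j \<in> J}"
    by (simp add: cycle_type_def)
  then obtain a where "\<And>u. u < r \<Longrightarrow> a u \<in> A \<and> a u \<in> J" "inj_on (\<lambda>u. perm_cycle \<sigma> (a u)) {..<r}"
    by (rule obtain_injective_representatives) blast
  then show ?thesis using that[OF \<open>0 < k\<close> C(1)] unfolding J_def by blast
qed

lemma rootable_block_equal_cycles: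
  assumes g: "(F, \<sigma>) \<in> carrier (wreath_on G A)" "finite A" and "0 < r" "0 < k" "C \<in> conj_classes G"
    and a: "\<And>u. u < r \<Longrightarrow> a u \<in> type_points G A (F, \<sigma>) C k" "inj_on (\<lambda>u. perm_cycle \<sigma> (a u)) {..<r}"
  shows "\<exists>B. rootable_block G r A (F, \<sigma>) B"
proof -
  have \<sigma>: "permutation \<sigma>" using wreath_on_carrierD(2)[OF g(1)] g(2) permutation_permutes by blast
  define J where "J = type_points G A (F, \<sigma>) C k"
  have ak: "a u \<in> A \<and> least_power \<sigma> (a u) = k" and "cycle_prod G F \<sigma> (a u) k \<in> C" if "u < r" for u
    using a(1)[OF that] by (simp_all add: type_points_def card_perm_cycle[OF \<sigma>])
  then have "\<exists>z\<in>carrier G. cycle_prod G F \<sigma> (a u) k = z \<otimes> cycle_prod G F \<sigma> (a 0) k \<otimes> inv z"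
    if "u < r" for u
    using conj_classes_conjugate[OF assms(5)] that \<open>0 < r\<close> by blast
  then obtain B where B: "B \<subseteq> (\<Union>u<r. perm_cycle \<sigma> (a u))" "card B = r * k" "\<sigma> ` B = B"
    "\<exists>h\<in>carrier (wreath_on G B). h [^]\<^bsub>wreath_on G B\<^esub> r = wr_restrict G B (F, \<sigma>)"
    using nat_pow_root_on_equal_cycles[OF g \<open>0 < r\<close> \<open>0 < k\<close> ak a(2)] by blast
  have "B \<subseteq> J"
  proof
    fix x assume "x \<in> B"
    then obtain u t where "u < r" "x = (\<sigma> ^^ t) (a u)" using B(1) unfolding perm_cycle_def by auto
    then show "x \<in> J" using type_points_funpow[OF g assms(5)] a(1) unfolding J_def by simp
  qed
  have "r * k' dvd card (type_points G A (F, \<sigma>) C' k' \<inter> B)" if "C' \<in> conj_classes G" for C' k'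
  proof (cases "type_points G A (F, \<sigma>) C' k' \<inter> B = {}")
    case False
    then obtain i where "i \<in> type_points G A (F, \<sigma>) C' k'" "i \<in> J" using \<open>B \<subseteq> J\<close> by blast
    then have "C' = C" "k' = k"
      using type_points_class_unique[OF that assms(5)] unfolding J_def by simp_all
    then show ?thesis using \<open>B \<subseteq> J\<close> B(2) by (simp add: J_def Int_absorb1)
  qed simp
  moreover have "B \<noteq> {}" using B(2) \<open>0 < k\<close> \<open>0 < r\<close> by (metis card.empty mult_is_0 not_gr0)
  moreover have "B \<subseteq> A" using \<open>B \<subseteq> J\<close> by (auto simp: J_def type_points_def)
  ultimately show ?thesis using B(3,4) by (auto simp: rootable_block_def)
qed

lemma ex_rootable_block:
  assumes "Factorial_Ring.prime r" "\<not> r dvd order G"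
    and g: "(F, \<sigma>) \<in> carrier (wreath_on G A)" "finite A" "A \<noteq> {}"
    and div: "type_divisible G r A (F, \<sigma>)"
  shows "\<exists>B. rootable_block G r A (F, \<sigma>) B"
proof (cases "\<exists>j\<in>A. \<not> r dvd least_power \<sigma> j")
  case True
  then show ?thesis using rootable_block_coprime_cycle[OF g(1,2) _ assms(1) _ assms(2)] by blast
next
  case False
  moreover obtain j where "j \<in> A" using g(3) by blast
  ultimately obtain k C a where "0 < k" "C \<in> conj_classes G"
    "\<And>u. u < r \<Longrightarrow> a u \<in> type_points G A (F, \<sigma>) C k" "inj_on (\<lambda>u. perm_cycle \<sigma> (a u)) {..<r}"
    using obtain_equal_cycles[OF g(1,2) _ div] by blast
  then show ?thesis
    using rootable_block_equal_cycles[OF g(1,2) prime_gt_0_nat[OF assms(1)]] by blast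
qed

lemma nat_pow_root_if_type_divisible:
  assumes "Factorial_Ring.prime r" "\<not> r dvd order G"
  shows "finite A \<Longrightarrow> g \<in> carrier (wreath_on G A) \<Longrightarrow> type_divisible G r A g \<Longrightarrow>
    \<exists>h\<in>carrier (wreath_on G A). h [^]\<^bsub>wreath_on G A\<^esub> r = g"
proof (induction "card A" arbitrary: A g rule: less_induct)
  case less
  interpret W: group "wreath_on G A" by (rule wreath_on_group)
  obtain F \<sigma> where g: "g = (F, \<sigma>)" by fastforce
  note gF = less.prems(2)[unfolded g] and div = less.prems(3)[unfolded g]
  note F = wreath_on_carrierD[OF gF]
  show ?case
  proof (cases "A = {}")
    case True
    then have "g = \<one>\<^bsub>wreath_on G A\<^esub>"
      using F(2,3) by (auto simp: g fun_eq_iff permutes_empty)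
    then show ?thesis by (metis W.nat_pow_one W.one_closed)
  next
    case False
    obtain B where "rootable_block G r A (F, \<sigma>) B"
      using ex_rootable_block[OF assms gF less.prems(1) False div] by blast
    then have B: "B \<noteq> {}" "B \<subseteq> A" "\<sigma> ` B = B"
      "\<exists>h\<in>carrier (wreath_on G B). h [^]\<^bsub>wreath_on G B\<^esub> r = wr_restrict G B (F, \<sigma>)"
      "\<And>C k. C \<in> conj_classes G \<Longrightarrow> 0 < k \<Longrightarrow> r dvd k \<Longrightarrow> r * k dvd card (type_points G A (F, \<sigma>) C k \<inter> B)"
      by (auto simp: rootable_block_def)
    have "A - B \<subset> A" using B(1,2) by blast
    then have "card (A - B) < card A" using less.prems(1) by (rule psubset_card_mono[rotated])
    moreover have "wr_restrict G (A - B) (F, \<sigma>) \<in> carrier (wreath_on G (A - B))"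
      using wr_restrict_closed[OF gF permutes_image_Diff[OF F(2) B(3)]] .
    moreover have "type_divisible G r (A - B) (wr_restrict G (A - B) (F, \<sigma>))"
      using type_divisible_Diff[OF div gF less.prems(1) B(2,3,5)] .
    ultimately obtain h2 where "h2 \<in> carrier (wreath_on G (A - B))"
      "h2 [^]\<^bsub>wreath_on G (A - B)\<^esub> r = wr_restrict G (A - B) (F, \<sigma>)"
      using less.hyps less.prems(1) by blast
    then show ?thesis
      using nat_pow_root_of_split[OF gF B(2,3)] B(4) g by blast
  qed
qed

theorem wreath_on_nat_pow_root_iff:
  assumes "Factorial_Ring.prime r" "\<not> r dvd order G"
    and "finite A" "g \<in> carrier (wreath_on G A)"
  shows "(\<exists>h\<in>carrier (wreath_on G A). h [^]\<^bsub>wreath_on G A\<^esub> r = g) \<longleftrightarrow>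
    (\<forall>C\<in>conj_classes G. \<forall>k\<in>{1..card A}. r dvd k \<longrightarrow> r dvd cycle_type G A g C k)"
  unfolding type_divisible_iff_cycle_type[OF assms(4,3), symmetric]
  using type_divisible_nat_pow[OF _ assms(3,1)] nat_pow_root_if_type_divisible[OF assms(1,2)] assms(3,4)
  by blast

end

theorem corollary4p4:
  fixes G :: "('a, 'b) monoid_scheme" and n r :: nat and g :: "(nat \<Rightarrow> 'a) \<times> (nat \<Rightarrow> nat)"
  assumes "group G" and "finite (carrier G)"
    and "Factorial_Ring.prime r" and "\<not> r dvd order G"
    and "g \<in> carrier (wreath G n)"
  shows "(\<exists>h \<in> carrier (wreath G n). h [^]\<^bsub>wreath G n\<^esub> r = g) \<longleftrightarrow>
         (\<forall>C \<in> conj_classes G. \<forall>k \<in> {1..n}. r dvd k \<longrightarrow> r dvd wr_type G n g C k)"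
  using group.wreath_on_nat_pow_root_iff[OF assms(1,3,4), of "{1..n}" g] assms(5)
  by (simp add: wreath_eq_wreath_on wr_type_eq_cycle_type)

end
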